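(* For $n\ge1$, as polynomial identities in the variables $x_1,\dots,x_{n+1}$ (the ratios being polynomials): (1) for $\nu\in W^{n+1}$, $$\left.\frac{\det(Q_{\nu_i}(x_j))_{i,j=1}^{n+1}}{\det(x_j^{i-1})_{i,j=1}^{n+1}}\right|_{x_1=0}=\frac{(-1)^n}{\lambda_0^n}\sum_{k\in W^{n,n+1}(\nu)}\prod_{i=1}^n\hat\pi_{k_i}\,\frac{\det(\hat Q_{k_i}(x_{j+1}))_{i,j=1}^n}{\det(x_{j+1}^{i-1})_{i,j=1}^n};$$ (2) for $\nu\in W^n$, $$\frac{\det(\hat Q_{\nu_i}(x_j))_{i,j=1}^n}{\det(x_j^{i-1})_{i,j=1}^n}=\sum_{k\in W^{n,n}(\nu)}\prod_{i=1}^n\pi_{k_i}\,\frac{\det(Q_{k_i}(x_j))_{i,j=1}^n}{\det(x_j^{i-1})_{i,j=1}^n}.$$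
   Context: Let $\lambda_k=\lambda(k)>0$ ($k\ge0$) and $\mu_k=\mu(k)$ with $\mu_0=0$, $\mu_k>0$ ($k\ge1$) be the rates of a birth and death chain on $\mathbb N=\{0,1,\dots\}$ reflecting at $0$, with $\pi_0=1$, $\pi_k=\prod_{i=1}^k\lambda_{i-1}/\mu_i$. Dual rates: $\hat\lambda_k=\mu_{k+1}$, $\hat\mu_k=\lambda_k$; $\hat\pi_0=1$, $\hat\pi_k=\prod_{i=1}^k\mu_i/\lambda_i$. Polynomials $Q_n,\hat Q_n$ (degree $n$) are defined by $Q_{-1}=\hat Q_{-1}=0$, $Q_0=\hat Q_0=1$ and, for $n\ge0$, $-xQ_n(x)=\mu_nQ_{n-1}(x)-(\lambda_n+\mu_n)Q_n(x)+\lambda_nQ_{n+1}(x)$ and $-x\hat Q_n(x)=\lambda_n\hat Q_{n-1}(x)-(\mu_{n+1}+\lambda_n)\hat Q_n(x)+\mu_{n+1}\hat Q_{n+1}(x)$. $W^n=\{\nu\in\mathbb N^n:\nu_1<\dots<\nu_n\}$; for $\nu\in W^{n+1}$, $W^{n,n+1}(\nu)=\{k\in W^n:\nu_1\le k_1<\nu_2\le k_2<\dots\le k_n<\nu_{n+1}\}$; for $\nu\in W^n$, $W^{n,n}(\nu)=\{k\in W^n:k_1\le\nu_1<k_2\le\nu_2<\dots<k_n\le\nu_n\}$. $\det(x_j^{i-1})_{i,j=1}^n=\prod_{i<j}(x_j-x_i)$. *)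

theory Defs
  imports Complex_Main "Jordan_Normal_Form.Determinant"
begin

text \<open>Polynomials Q_n (as real functions) for birth rates lam and death rates mu,
  from the three-term recurrence with Q_{-1} = 0, Q_0 = 1.\<close>
fun Qp :: "(nat \<Rightarrow> real) \<Rightarrow> (nat \<Rightarrow> real) \<Rightarrow> nat \<Rightarrow> real \<Rightarrow> real" where
  "Qp lam mu 0 x = 1"
| "Qp lam mu (Suc 0) x = (lam 0 + mu 0 - x) / lam 0"
| "Qp lam mu (Suc (Suc n)) x =
     ((lam (Suc n) + mu (Suc n) - x) * Qp lam mu (Suc n) x - mu (Suc n) * Qp lam mu n x)
       / lam (Suc n)"

definition Qhat :: "(nat \<Rightarrow> real) \<Rightarrow> (nat \<Rightarrow> real) \<Rightarrow> nat \<Rightarrow> real \<Rightarrow> real" where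
  "Qhat lam mu = Qp (\<lambda>k. mu (Suc k)) lam"

definition piw :: "(nat \<Rightarrow> real) \<Rightarrow> (nat \<Rightarrow> real) \<Rightarrow> nat \<Rightarrow> real" where
  "piw lam mu k = (\<Prod>i=1..k. lam (i - 1) / mu i)"

definition pihat :: "(nat \<Rightarrow> real) \<Rightarrow> (nat \<Rightarrow> real) \<Rightarrow> nat \<Rightarrow> real" where
  "pihat lam mu k = (\<Prod>i=1..k. mu i / lam i)"

definition Wset :: "nat \<Rightarrow> nat list set" where
  "Wset n = {\<nu>. length \<nu> = n \<and> sorted_wrt (<) \<nu>}"

definition Winter :: "nat \<Rightarrow> nat list \<Rightarrow> nat list set" where
  "Winter n \<nu> = {k \<in> Wset n. \<forall>i<n. \<nu> ! i \<le> k ! i \<and> k ! i < \<nu> ! Suc i}"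

definition Wsame :: "nat \<Rightarrow> nat list \<Rightarrow> nat list set" where
  "Wsame n \<nu> = {k \<in> Wset n. (\<forall>i<n. k ! i \<le> \<nu> ! i) \<and> (\<forall>i. 0 < i \<and> i < n \<longrightarrow> \<nu> ! (i - 1) < k ! i)}"

definition fdet :: "(nat \<Rightarrow> real \<Rightarrow> real) \<Rightarrow> nat \<Rightarrow> nat list \<Rightarrow> (nat \<Rightarrow> real) \<Rightarrow> real" where
  "fdet f n \<nu> x = det (mat n n (\<lambda>(i, j). f (\<nu> ! i) (x j)))"

definition vdet :: "nat \<Rightarrow> (nat \<Rightarrow> real) \<Rightarrow> real" where
  "vdet n x = det (mat n n (\<lambda>(i, j). x j ^ i))"

end

theory Submission
  imports Defs
begin

(* The three-term recurrences of Q and of the dual polynomials Q^ factor into two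
   first-order relations,
     lam_0 (Q_k - Q_(k+1)) = x pi^_k Q^_k   and   Q^_(k+1) - Q^_k = pi_(k+1) Q_(k+1).
   Telescoping, Q^_(nu_i) - Q^_(nu_(i-1)) is a combination of the Q_k with nu_(i-1) < k <= nu_i,
   and Q_(nu_(i+1)) - Q_(nu_i) is a combination of the x Q^_k with nu_i <= k < nu_(i+1).
   Replacing the rows of a determinant by consecutive differences and expanding
   multilinearly therefore yields sums over the interlacing sequences k.  For (1),
   Q_k(0) = 1 turns the first column into (1, 0, ..., 0) once x_1 = 0, and the factors
   x_(j+1) taken out of the remaining columns cancel against the Vandermonde determinant. *)

lemma det_mat_row_sums_PiE:
  fixes c :: "nat \<Rightarrow> nat \<Rightarrow> 'a::comm_ring_1" and g :: "nat \<Rightarrow> nat \<Rightarrow> 'a"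
  assumes "\<And>i. i < n \<Longrightarrow> finite (S i)"
  shows "det (mat n n (\<lambda>(i, j). \<Sum>k\<in>S i. c i k * g k j))
    = (\<Sum>\<kappa>\<in>PiE {0..<n} S. (\<Prod>i=0..<n. c i (\<kappa> i)) * det (mat n n (\<lambda>(i, j). g (\<kappa> i) j)))"
proof -
  let ?P = "{p. p permutes {0..<n}}"
  let ?C = "\<lambda>\<kappa>. \<Prod>i=0..<n. c i (\<kappa> i)" and ?G = "\<lambda>\<kappa> p. \<Prod>i=0..<n. g (\<kappa> i) (p i)"
  have "det (mat n n (\<lambda>(i, j). \<Sum>k\<in>S i. c i k * g k j))
      = (\<Sum>p\<in>?P. signof p * (\<Prod>i=0..<n. \<Sum>k\<in>S i. c i k * g k (p i)))"
    unfolding det_def'[OF mat_carrier]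
    by (intro sum.cong refl arg_cong2[where f="(*)"] prod.cong) (auto dest: permutes_in_image)
  also have "\<dots> = (\<Sum>p\<in>?P. signof p * (\<Sum>\<kappa>\<in>PiE {0..<n} S. \<Prod>i=0..<n. c i (\<kappa> i) * g (\<kappa> i) (p i)))"
    by (subst prod_sum_PiE) (auto simp: assms)
  also have "\<dots> = (\<Sum>p\<in>?P. \<Sum>\<kappa>\<in>PiE {0..<n} S. ?C \<kappa> * (signof p * ?G \<kappa> p))"
    by (simp add: sum_distrib_left prod.distrib algebra_simps)
  also have "\<dots> = (\<Sum>\<kappa>\<in>PiE {0..<n} S. \<Sum>p\<in>?P. ?C \<kappa> * (signof p * ?G \<kappa> p))"
    by (rule sum.swap)
  also have "\<dots> = (\<Sum>\<kappa>\<in>PiE {0..<n} S. ?C \<kappa> * det (mat n n (\<lambda>(i, j). g (\<kappa> i) j)))"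
    unfolding det_def'[OF mat_carrier] sum_distrib_left
    by (intro sum.cong refl arg_cong2[where f="(*)"] prod.cong) (auto dest: permutes_in_image)
  finally show ?thesis .
qed

lemma sum_lists_eq_sum_PiE:
  assumes "\<And>\<kappa>. \<kappa> \<in> T \<longleftrightarrow> length \<kappa> = n \<and> (\<forall>i<n. \<kappa> ! i \<in> S i)"
  shows "sum G T = (\<Sum>\<kappa>\<in>PiE {0..<n} S. G (map \<kappa> [0..<n]))"
proof (rule sum.reindex_bij_witness
    [where i="\<lambda>\<kappa>. map \<kappa> [0..<n]" and j="\<lambda>k. restrict ((!) k) {0..<n}"])
  show "map (restrict ((!) k) {0..<n}) [0..<n] = k" if "k \<in> T" for k
    using that assms by (intro nth_equalityI) auto
  then show "G (map (restrict ((!) k) {0..<n}) [0..<n]) = G k" if "k \<in> T" for k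
    using that by simp
next
  show "restrict ((!) k) {0..<n} \<in> PiE {0..<n} S" if "k \<in> T" for k
    using that assms by auto
  show "restrict ((!) (map \<kappa> [0..<n])) {0..<n} = \<kappa>" if "\<kappa> \<in> PiE {0..<n} S" for \<kappa>
    using that by (auto simp: PiE_def extensional_def)
  show "map \<kappa> [0..<n] \<in> T" if "\<kappa> \<in> PiE {0..<n} S" for \<kappa>
    using that assms by auto
qed

lemma det_mat_row_sums:
  fixes c :: "nat \<Rightarrow> nat \<Rightarrow> 'a::comm_ring_1" and g :: "nat \<Rightarrow> nat \<Rightarrow> 'a"
  assumes "\<And>i. i < n \<Longrightarrow> finite (S i)"
    and "\<And>\<kappa>. \<kappa> \<in> T \<longleftrightarrow> length \<kappa> = n \<and> (\<forall>i<n. \<kappa> ! i \<in> S i)"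
  shows "det (mat n n (\<lambda>(i, j). \<Sum>k\<in>S i. c i k * g k j))
    = (\<Sum>\<kappa>\<in>T. (\<Prod>i<n. c i (\<kappa> ! i)) * det (mat n n (\<lambda>(i, j). g (\<kappa> ! i) j)))"
proof -
  have "det (mat n n (\<lambda>(i, j). \<Sum>k\<in>S i. c i k * g k j))
      = (\<Sum>\<kappa>\<in>PiE {0..<n} S. (\<Prod>i=0..<n. c i (\<kappa> i)) * det (mat n n (\<lambda>(i, j). g (\<kappa> i) j)))"
    by (rule det_mat_row_sums_PiE[OF assms(1)])
  also have "\<dots> = (\<Sum>\<kappa>\<in>T. (\<Prod>i<n. c i (\<kappa> ! i)) * det (mat n n (\<lambda>(i, j). g (\<kappa> ! i) j)))"
    unfolding sum_lists_eq_sum_PiE[OF assms(2)] atLeast0LessThan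
    by (intro sum.cong refl arg_cong2[where f="(*)"] prod.cong arg_cong[where f=det] eq_matI) auto
  finally show ?thesis .
qed

lemma det_mat_scale_cols:
  fixes y :: "nat \<Rightarrow> 'a::comm_ring_1"
  shows "det (mat n n (\<lambda>(i, j). y j * a i j)) = (\<Prod>j<n. y j) * det (mat n n (\<lambda>(i, j). a i j))"
  unfolding det_def'[OF mat_carrier] sum_distrib_left
proof (intro sum.cong refl)
  fix p assume "p \<in> {p. p permutes {0..<n}}"
  then have p: "p permutes {0..<n}" by simp
  have "(\<Prod>i=0..<n. mat n n (\<lambda>(i, j). y j * a i j) $$ (i, p i))
      = (\<Prod>i=0..<n. y (p i)) * (\<Prod>i=0..<n. mat n n (\<lambda>(i, j). a i j) $$ (i, p i))"
    unfolding prod.distrib[symmetric] using p by (intro prod.cong) (auto dest: permutes_in_image)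
  also have "(\<Prod>i=0..<n. y (p i)) = (\<Prod>j<n. y j)"
    using prod.permute[OF p, of y] by (simp add: comp_def atLeast0LessThan)
  finally show "signof p * (\<Prod>i=0..<n. mat n n (\<lambda>(i, j). y j * a i j) $$ (i, p i))
      = (\<Prod>j<n. y j) * (signof p * (\<Prod>i=0..<n. mat n n (\<lambda>(i, j). a i j) $$ (i, p i)))"
    by (simp only: ac_simps)
qed

lemma det_mat_row_differences:
  fixes f :: "nat \<Rightarrow> nat \<Rightarrow> 'a::comm_ring_1"
  shows "det (mat n n (\<lambda>(i, j). f i j))
    = det (mat n n (\<lambda>(i, j). if i = 0 then f 0 j else f i j - f (i - 1) j))"
proof -
  define L where "L = mat n n (\<lambda>(i, l). if l \<le> i then (1::'a) else 0)"
  define D where "D = mat n n (\<lambda>(i, j). if i = 0 then f 0 j else f i j - f (i - 1) j)"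
  have L: "L \<in> carrier_mat n n" and D: "D \<in> carrier_mat n n"
    unfolding L_def D_def by auto
  have detL: "det L = 1"
  proof -
    have "det L = prod_list (diag_mat L)"
      by (rule det_lower_triangular[OF _ L]) (auto simp: L_def)
    also have "diag_mat L = replicate n 1"
      by (rule nth_equalityI) (auto simp: diag_mat_def L_def)
    finally show ?thesis by simp
  qed
  have telescope:
    "(\<Sum>l\<in>{0..<n}. (if l \<le> i then 1 else 0) * (if l = 0 then f 0 j else f l j - f (l - 1) j)) = f i j"
    if "i < n" for i j
  proof -
    have "(\<Sum>l\<in>{0..<n}. (if l \<le> i then 1 else 0) * (if l = 0 then f 0 j else f l j - f (l - 1) j))
       = (\<Sum>l\<in>{0..i}. (if l = 0 then f 0 j else f l j - f (l - 1) j))"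
      using that by (intro sum.mono_neutral_cong_right) auto
    also have "\<dots> = f i j"
      by (induction i) auto
    finally show ?thesis .
  qed
  have "mat n n (\<lambda>(i, j). f i j) = L * D"
    by (rule eq_matI) (auto simp: L_def D_def scalar_prod_def telescope)
  then show ?thesis
    using det_mult[OF L D] detL D_def by simp
qed

lemma det_first_col_zero_below:
  fixes A :: "'a::comm_ring_1 mat"
  assumes A: "A \<in> carrier_mat (Suc n) (Suc n)"
    and zero: "\<And>i. 0 < i \<Longrightarrow> i < Suc n \<Longrightarrow> A $$ (i, 0) = 0"
  shows "det A = A $$ (0, 0) * det (mat n n (\<lambda>(i, j). A $$ (Suc i, Suc j)))"
proof -
  have "det A = (\<Sum>i<Suc n. A $$ (i, 0) * cofactor A i 0)"
    by (rule laplace_expansion_column[OF A]) simp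
  also have "\<dots> = A $$ (0, 0) * cofactor A 0 0"
    by (subst sum.lessThan_Suc_shift) (auto simp: zero)
  also have "mat_delete A 0 0 = mat n n (\<lambda>(i, j). A $$ (Suc i, Suc j))"
    using A by (intro eq_matI) (auto simp: mat_delete_def)
  then have "cofactor A 0 0 = det (mat n n (\<lambda>(i, j). A $$ (Suc i, Suc j)))"
    by (simp add: cofactor_def)
  finally show ?thesis .
qed

lemma Wsame_iff:
  assumes "\<nu> \<in> Wset n"
  shows "k \<in> Wsame n \<nu> \<longleftrightarrow>
    length k = n \<and> (\<forall>i<n. k ! i \<in> (if i = 0 then {..\<nu> ! 0} else {\<nu> ! (i - 1)<..\<nu> ! i}))"
    (is "_ \<longleftrightarrow> _ \<and> (\<forall>i<n. k ! i \<in> ?S i)")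
proof
  assume "k \<in> Wsame n \<nu>"
  then show "length k = n \<and> (\<forall>i<n. k ! i \<in> ?S i)"
    by (auto simp: Wsame_def Wset_def)
next
  assume k: "length k = n \<and> (\<forall>i<n. k ! i \<in> ?S i)"
  have \<nu>: "length \<nu> = n" "sorted \<nu>"
    using assms by (auto simp: Wset_def strict_sorted_imp_sorted)
  have "k ! i < k ! j" if "i < j" "j < n" for i j
  proof -
    have "k ! i \<in> ?S i"
      using k that by simp
    then have "k ! i \<le> \<nu> ! i"
      by (cases "i = 0") auto
    also have "\<nu> ! i \<le> \<nu> ! (j - 1)"
      using \<nu> that by (intro sorted_nth_mono) auto
    also have "\<nu> ! (j - 1) < k ! j"
      using k that by auto
    finally show ?thesis .
  qed
  then show "k \<in> Wsame n \<nu>"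
    using k by (auto simp: Wsame_def Wset_def sorted_wrt_iff_nth_less split: if_splits)
qed

lemma Winter_iff:
  assumes "\<nu> \<in> Wset (Suc n)"
  shows "k \<in> Winter n \<nu> \<longleftrightarrow> length k = n \<and> (\<forall>i<n. k ! i \<in> {\<nu> ! i..<\<nu> ! Suc i})"
proof
  assume "k \<in> Winter n \<nu>"
  then show "length k = n \<and> (\<forall>i<n. k ! i \<in> {\<nu> ! i..<\<nu> ! Suc i})"
    by (auto simp: Winter_def Wset_def)
next
  assume k: "length k = n \<and> (\<forall>i<n. k ! i \<in> {\<nu> ! i..<\<nu> ! Suc i})"
  have \<nu>: "length \<nu> = Suc n" "sorted \<nu>"
    using assms by (auto simp: Wset_def strict_sorted_imp_sorted)
  have "k ! i < k ! j" if "i < j" "j < n" for i j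
  proof -
    have "k ! i < \<nu> ! Suc i"
      using k that by auto
    also have "\<nu> ! Suc i \<le> \<nu> ! j"
      using \<nu> that by (intro sorted_nth_mono) auto
    also have "\<nu> ! j \<le> k ! j"
      using k that by auto
    finally show ?thesis .
  qed
  then show "k \<in> Winter n \<nu>"
    using k by (auto simp: Winter_def Wset_def sorted_wrt_iff_nth_less)
qed

lemma fdet_Suc_at_zero:
  assumes "\<And>k. f k 0 = 1" and "x 0 = 0"
  shows "fdet f (Suc n) \<nu> x
    = det (mat n n (\<lambda>(i, j). f (\<nu> ! Suc i) (x (Suc j)) - f (\<nu> ! i) (x (Suc j))))"
proof -
  let ?D = "mat (Suc n) (Suc n)
    (\<lambda>(i, j). if i = 0 then f (\<nu> ! 0) (x j) else f (\<nu> ! i) (x j) - f (\<nu> ! (i - 1)) (x j))"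
  have "fdet f (Suc n) \<nu> x = det ?D"
    unfolding fdet_def by (rule det_mat_row_differences)
  also have "\<dots> = ?D $$ (0, 0) * det (mat n n (\<lambda>(i, j). ?D $$ (Suc i, Suc j)))"
    by (rule det_first_col_zero_below) (auto simp: assms)
  also have "\<dots> = det (mat n n (\<lambda>(i, j). f (\<nu> ! Suc i) (x (Suc j)) - f (\<nu> ! i) (x (Suc j))))"
    using assms by (auto intro!: arg_cong[where f=det])
  finally show ?thesis .
qed

lemma vdet_Suc_at_zero:
  assumes "x 0 = 0"
  shows "vdet (Suc n) x = (\<Prod>j<n. x (Suc j)) * vdet n (\<lambda>j. x (Suc j))"
proof -
  let ?V = "mat (Suc n) (Suc n) (\<lambda>(i, j). x j ^ i)"
  have "vdet (Suc n) x = ?V $$ (0, 0) * det (mat n n (\<lambda>(i, j). ?V $$ (Suc i, Suc j)))"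
    unfolding vdet_def by (rule det_first_col_zero_below) (auto simp: assms)
  also have "\<dots> = det (mat n n (\<lambda>(i, j). x (Suc j) * x (Suc j) ^ i))"
    by (auto intro!: arg_cong[where f=det])
  also have "\<dots> = (\<Prod>j<n. x (Suc j)) * vdet n (\<lambda>j. x (Suc j))"
    unfolding vdet_def by (rule det_mat_scale_cols)
  finally show ?thesis .
qed

locale birth_death_rates =
  fixes lam mu :: "nat \<Rightarrow> real"
  assumes lam_pos: "\<And>k. lam k > 0"
    and mu_0: "mu 0 = 0"
    and mu_pos: "\<And>k. k \<ge> 1 \<Longrightarrow> mu k > 0"
begin

lemma lam_nonzero [simp]: "lam k \<noteq> 0"
  using lam_pos[of k] by simp

lemma mu_Suc_nonzero [simp]: "mu (Suc k) \<noteq> 0"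
  using mu_pos[of "Suc k"] by simp

lemma piw_Suc: "piw lam mu (Suc k) = piw lam mu k * lam k / mu (Suc k)"
  unfolding piw_def by (simp add: prod.nat_ivl_Suc')

lemma pihat_Suc: "pihat lam mu (Suc k) = pihat lam mu k * mu (Suc k) / lam (Suc k)"
  unfolding pihat_def by (simp add: prod.nat_ivl_Suc')

lemma pihat_mult_piw: "pihat lam mu k * piw lam mu k = lam 0 / lam k"
proof (induction k)
  case 0
  then show ?case by (simp add: piw_def pihat_def)
next
  case (Suc k)
  have "pihat lam mu (Suc k) * piw lam mu (Suc k)
      = pihat lam mu k * piw lam mu k * (lam k / lam (Suc k))"
    by (simp add: piw_Suc pihat_Suc)
  then show ?case
    using Suc by simp
qed

lemma Qhat_0 [simp]: "Qhat lam mu 0 x = 1"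
  by (simp add: Qhat_def)

lemma Qhat_1: "Qhat lam mu (Suc 0) x = (mu 1 + lam 0 - x) / mu 1"
  by (simp add: Qhat_def)

lemma Qhat_Suc_Suc: "Qhat lam mu (Suc (Suc k)) x =
    ((mu (Suc (Suc k)) + lam (Suc k) - x) * Qhat lam mu (Suc k) x - lam (Suc k) * Qhat lam mu k x)
      / mu (Suc (Suc k))"
  by (simp add: Qhat_def)

lemma Qp_diff_step:
  assumes "lam 0 * (Qp lam mu m x - Qp lam mu (Suc m) x) = x * pihat lam mu m * Qhat lam mu m x"
    and "Qhat lam mu (Suc m) x - Qhat lam mu m x = piw lam mu (Suc m) * Qp lam mu (Suc m) x"
  shows "lam 0 * (Qp lam mu (Suc m) x - Qp lam mu (Suc (Suc m)) x)
    = x * pihat lam mu (Suc m) * Qhat lam mu (Suc m) x"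
proof -
  let ?Q = "\<lambda>k. Qp lam mu k x" and ?Qh = "\<lambda>k. Qhat lam mu k x"
    and ?p = "piw lam mu" and ?ph = "pihat lam mu"
  have Qh_m: "?Qh m = ?Qh (Suc m) - ?p (Suc m) * ?Q (Suc m)"
    using assms(2) by simp
  have mu_ph_p: "mu (Suc m) * ?ph m * ?p (Suc m) = lam 0"
    using pihat_mult_piw[of m] by (simp add: piw_Suc field_simps)
  have rec_Q: "lam (Suc m) * (?Q (Suc m) - ?Q (Suc (Suc m)))
      = x * ?Q (Suc m) + mu (Suc m) * (?Q m - ?Q (Suc m))"
    by (simp add: field_simps)
  have "lam 0 * (lam (Suc m) * (?Q (Suc m) - ?Q (Suc (Suc m))))
      = lam 0 * x * ?Q (Suc m) + mu (Suc m) * (lam 0 * (?Q m - ?Q (Suc m)))"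
    unfolding rec_Q by (simp add: algebra_simps)
  also have "\<dots> = lam 0 * x * ?Q (Suc m)
      + mu (Suc m) * x * ?ph m * (?Qh (Suc m) - ?p (Suc m) * ?Q (Suc m))"
    unfolding assms(1) Qh_m by (simp add: algebra_simps)
  also have "\<dots> = lam (Suc m) * (x * ?ph (Suc m) * ?Qh (Suc m))"
    using mu_ph_p by (simp add: pihat_Suc algebra_simps)
  finally have "lam (Suc m) * (lam 0 * (?Q (Suc m) - ?Q (Suc (Suc m))))
      = lam (Suc m) * (x * ?ph (Suc m) * ?Qh (Suc m))"
    by (simp only: mult.left_commute)
  then show ?thesis
    by simp
qed

lemma Qhat_diff_step:
  assumes "lam 0 * (Qp lam mu (Suc m) x - Qp lam mu (Suc (Suc m)) x)
      = x * pihat lam mu (Suc m) * Qhat lam mu (Suc m) x"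
    and "Qhat lam mu (Suc m) x - Qhat lam mu m x = piw lam mu (Suc m) * Qp lam mu (Suc m) x"
  shows "Qhat lam mu (Suc (Suc m)) x - Qhat lam mu (Suc m) x
    = piw lam mu (Suc (Suc m)) * Qp lam mu (Suc (Suc m)) x"
proof -
  let ?Q = "\<lambda>k. Qp lam mu k x" and ?Qh = "\<lambda>k. Qhat lam mu k x"
    and ?p = "piw lam mu" and ?ph = "pihat lam mu"
  have Qh_m: "?Qh m = ?Qh (Suc m) - ?p (Suc m) * ?Q (Suc m)"
    using assms(2) by simp
  have "lam 0 * (x * ?Qh (Suc m)) = lam (Suc m) * (?ph (Suc m) * ?p (Suc m)) * (x * ?Qh (Suc m))"
    by (simp add: pihat_mult_piw)
  also have "\<dots> = lam (Suc m) * ?p (Suc m) * (x * ?ph (Suc m) * ?Qh (Suc m))"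
    by (simp only: ac_simps)
  also have "\<dots> = lam (Suc m) * ?p (Suc m) * (lam 0 * (?Q (Suc m) - ?Q (Suc (Suc m))))"
    by (simp only: assms(1))
  also have "\<dots> = lam 0 * (lam (Suc m) * ?p (Suc m) * (?Q (Suc m) - ?Q (Suc (Suc m))))"
    by (simp only: ac_simps)
  finally have x_Qh: "x * ?Qh (Suc m) = lam (Suc m) * ?p (Suc m) * (?Q (Suc m) - ?Q (Suc (Suc m)))"
    by (simp only: mult_left_cancel[OF lam_nonzero])
  have "mu (Suc (Suc m)) * (?Qh (Suc (Suc m)) - ?Qh (Suc m))
      = lam (Suc m) * (?Qh (Suc m) - ?Qh m) - x * ?Qh (Suc m)"
    by (simp add: Qhat_Suc_Suc field_simps)
  also have "\<dots> = mu (Suc (Suc m)) * (?p (Suc (Suc m)) * ?Q (Suc (Suc m)))"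
    unfolding x_Qh Qh_m piw_Suc[of "Suc m"] by (simp add: field_simps del: Qp.simps)
  finally show ?thesis
    by (simp only: mult_left_cancel[OF mu_Suc_nonzero])
qed

lemma Qp_Qhat_Suc:
  "lam 0 * (Qp lam mu k x - Qp lam mu (Suc k) x) = x * pihat lam mu k * Qhat lam mu k x \<and>
   Qhat lam mu (Suc k) x - Qhat lam mu k x = piw lam mu (Suc k) * Qp lam mu (Suc k) x"
proof (induction k)
  case 0
  have "mu 1 \<noteq> 0"
    using mu_Suc_nonzero[of 0] by simp
  then show ?case
    using mu_0 by (simp add: Qhat_1 piw_def pihat_def field_simps)
next
  case (Suc m)
  then have "lam 0 * (Qp lam mu (Suc m) x - Qp lam mu (Suc (Suc m)) x)
      = x * pihat lam mu (Suc m) * Qhat lam mu (Suc m) x"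
    by (intro Qp_diff_step) auto
  with Suc show ?case
    using Qhat_diff_step by blast
qed

lemma Qhat_diff_eq_sum:
  "a \<le> b \<Longrightarrow> Qhat lam mu b x - Qhat lam mu a x = (\<Sum>k\<in>{a<..b}. piw lam mu k * Qp lam mu k x)"
proof (induction b rule: dec_induct)
  case (step c)
  have "{a<..Suc c} = insert (Suc c) {a<..c}"
    using step by auto
  then show ?case
    using step Qp_Qhat_Suc[of c x] by simp
qed simp

lemma Qhat_eq_sum: "Qhat lam mu b x = (\<Sum>k\<le>b. piw lam mu k * Qp lam mu k x)"
proof -
  have "{..b} = insert 0 {0<..b}"
    by auto
  then show ?thesis
    using Qhat_diff_eq_sum[of 0 b x] by (simp add: piw_def)
qed

lemma Qp_diff_eq_sum:
  "a \<le> b \<Longrightarrow> Qp lam mu b x - Qp lam mu a x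
     = (\<Sum>k\<in>{a..<b}. (-1 / lam 0 * pihat lam mu k) * (x * Qhat lam mu k x))"
proof (induction b rule: dec_induct)
  case (step c)
  have "{a..<Suc c} = insert c {a..<c}"
    using step by auto
  with step Qp_Qhat_Suc[of c x] show ?case
    by (simp add: field_simps)
qed simp

lemma Qp_at_zero: "Qp lam mu k 0 = 1"
  using Qp_diff_eq_sum[of 0 k 0] by simp

lemma fdet_Qhat_expansion:
  assumes "\<nu> \<in> Wset n"
  shows "fdet (Qhat lam mu) n \<nu> x
    = (\<Sum>k\<in>Wsame n \<nu>. (\<Prod>i<n. piw lam mu (k ! i)) * fdet (Qp lam mu) n k x)"
proof -
  define S where "S i = (if i = 0 then {..\<nu> ! 0} else {\<nu> ! (i - 1)<..\<nu> ! i})" for i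
  have \<nu>: "length \<nu> = n" "sorted \<nu>"
    using assms by (auto simp: Wset_def strict_sorted_imp_sorted)
  have row: "(if i = 0 then Qhat lam mu (\<nu> ! 0) (x j)
        else Qhat lam mu (\<nu> ! i) (x j) - Qhat lam mu (\<nu> ! (i - 1)) (x j))
      = (\<Sum>k\<in>S i. piw lam mu k * Qp lam mu k (x j))" if "i < n" for i j
  proof (cases "i = 0")
    case False
    then have "\<nu> ! (i - 1) \<le> \<nu> ! i"
      using \<nu> that by (intro sorted_nth_mono) auto
    with False show ?thesis
      by (simp add: S_def Qhat_diff_eq_sum)
  qed (simp add: S_def Qhat_eq_sum)
  have "fdet (Qhat lam mu) n \<nu> x = det (mat n n (\<lambda>(i, j).
      if i = 0 then Qhat lam mu (\<nu> ! 0) (x j)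
      else Qhat lam mu (\<nu> ! i) (x j) - Qhat lam mu (\<nu> ! (i - 1)) (x j)))"
    unfolding fdet_def by (rule det_mat_row_differences)
  also have "\<dots> = det (mat n n (\<lambda>(i, j). \<Sum>k\<in>S i. piw lam mu k * Qp lam mu k (x j)))"
    by (auto simp: row intro!: arg_cong[where f=det])
  also have "\<dots> = (\<Sum>k\<in>Wsame n \<nu>. (\<Prod>i<n. piw lam mu (k ! i)) * fdet (Qp lam mu) n k x)"
    unfolding fdet_def
    by (rule det_mat_row_sums[where c="\<lambda>_. piw lam mu" and g="\<lambda>k j. Qp lam mu k (x j)"])
       (auto simp: S_def Wsame_iff[OF assms])
  finally show ?thesis .
qed

lemma fdet_Qp_expansion_at_zero:
  assumes "\<nu> \<in> Wset (Suc n)" and "x 0 = 0"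
  shows "fdet (Qp lam mu) (Suc n) \<nu> x = (-1) ^ n / lam 0 ^ n * (\<Prod>j<n. x (Suc j)) *
    (\<Sum>k\<in>Winter n \<nu>. (\<Prod>i<n. pihat lam mu (k ! i)) * fdet (Qhat lam mu) n k (\<lambda>j. x (Suc j)))"
proof -
  define y where "y = (\<lambda>j. x (Suc j))"
  define c where "c k = -1 / lam 0 * pihat lam mu k" for k
  have \<nu>: "length \<nu> = Suc n" "sorted \<nu>"
    using assms by (auto simp: Wset_def strict_sorted_imp_sorted)
  have row: "Qp lam mu (\<nu> ! Suc i) (y j) - Qp lam mu (\<nu> ! i) (y j)
      = (\<Sum>k\<in>{\<nu> ! i..<\<nu> ! Suc i}. c k * (y j * Qhat lam mu k (y j)))" if "i < n" for i j
  proof -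
    have "\<nu> ! i \<le> \<nu> ! Suc i"
      using \<nu> that by (intro sorted_nth_mono) auto
    then show ?thesis
      by (simp add: Qp_diff_eq_sum c_def)
  qed
  have c_prod: "(\<Prod>i<n. c (k ! i)) = (-1) ^ n / lam 0 ^ n * (\<Prod>i<n. pihat lam mu (k ! i))" for k
    unfolding c_def prod.distrib by (simp only: prod_constant card_lessThan power_divide)
  have "fdet (Qp lam mu) (Suc n) \<nu> x
      = det (mat n n (\<lambda>(i, j). Qp lam mu (\<nu> ! Suc i) (y j) - Qp lam mu (\<nu> ! i) (y j)))"
    unfolding y_def using assms(2)
    by (rule fdet_Suc_at_zero[where f="Qp lam mu", OF Qp_at_zero])
  also have "\<dots> = det (mat n n (\<lambda>(i, j).
      \<Sum>k\<in>{\<nu> ! i..<\<nu> ! Suc i}. c k * (y j * Qhat lam mu k (y j))))"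
    by (auto simp: row intro!: arg_cong[where f=det])
  also have "\<dots> = (\<Sum>k\<in>Winter n \<nu>. (\<Prod>i<n. c (k ! i)) *
      det (mat n n (\<lambda>(i, j). y j * Qhat lam mu (k ! i) (y j))))"
    by (rule det_mat_row_sums[where c="\<lambda>_. c" and g="\<lambda>k j. y j * Qhat lam mu k (y j)"])
       (auto simp: Winter_iff[OF assms(1)])
  also have "\<dots> = (\<Sum>k\<in>Winter n \<nu>. (-1) ^ n / lam 0 ^ n * (\<Prod>i<n. pihat lam mu (k ! i)) *
      ((\<Prod>j<n. y j) * fdet (Qhat lam mu) n k y))"
    unfolding c_prod det_mat_scale_cols fdet_def ..
  finally show ?thesis
    by (simp add: y_def sum_distrib_left ac_simps)
qed

end

theorem proposition7p1:
  fixes lam mu :: "nat \<Rightarrow> real" and n :: nat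
  assumes lam_pos: "\<And>k. lam k > 0"
    and mu0: "mu 0 = 0"
    and mu_pos: "\<And>k. k \<ge> 1 \<Longrightarrow> mu k > 0"
    and n1: "n \<ge> 1"
  shows "(\<forall>\<nu> (x :: nat \<Rightarrow> real). \<nu> \<in> Wset (n + 1) \<and> x 0 = 0 \<and> inj_on x {0..n} \<longrightarrow>
            fdet (Qp lam mu) (n + 1) \<nu> x / vdet (n + 1) x
            = (-1) ^ n / lam 0 ^ n *
              (\<Sum>k\<in>Winter n \<nu>. (\<Prod>i<n. pihat lam mu (k ! i)) *
                  (fdet (Qhat lam mu) n k (\<lambda>j. x (Suc j)) / vdet n (\<lambda>j. x (Suc j)))))
       \<and> (\<forall>\<nu> (x :: nat \<Rightarrow> real). \<nu> \<in> Wset n \<and> inj_on x {0..<n} \<longrightarrow>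
            fdet (Qhat lam mu) n \<nu> x / vdet n x
            = (\<Sum>k\<in>Wsame n \<nu>. (\<Prod>i<n. piw lam mu (k ! i)) *
                  (fdet (Qp lam mu) n k x / vdet n x)))"
proof -
  interpret birth_death_rates lam mu
    using assms by unfold_locales
  have "fdet (Qp lam mu) (Suc n) \<nu> x / vdet (Suc n) x
      = (-1) ^ n / lam 0 ^ n * (\<Sum>k\<in>Winter n \<nu>. (\<Prod>i<n. pihat lam mu (k ! i)) *
          (fdet (Qhat lam mu) n k (\<lambda>j. x (Suc j)) / vdet n (\<lambda>j. x (Suc j))))"
    if "\<nu> \<in> Wset (Suc n)" "x 0 = 0" "inj_on x {0..n}" for \<nu> x
  proof -
    have "x (Suc j) \<noteq> x 0" if "j < n" for j
      using inj_onD[OF \<open>inj_on x {0..n}\<close>, of "Suc j" 0] that by auto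
    then have "(\<Prod>j<n. x (Suc j)) \<noteq> 0"
      using \<open>x 0 = 0\<close> by simp
    then show ?thesis
      using that
      by (simp add: fdet_Qp_expansion_at_zero vdet_Suc_at_zero sum_distrib_left sum_divide_distrib)
  qed
  then show ?thesis
    by (simp add: fdet_Qhat_expansion sum_divide_distrib)
qed

end
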